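(* Let $\alpha\ge1$ and let $X$ be a random variable with $\|X\|_{2\rho}\le\alpha\|X\|_\rho$ for all $\rho\ge1$. Define $N\colon[0,\infty)\to[0,\infty]$ by $\mathbb{P}(|X|\ge t)=e^{-N(t)}$ and $N^{-1}(s)=\sup\{t\ge0\colon N(t)\le s\}$. Then for every $\rho\ge1$, \[ \|X\|_\rho\sim_\alpha N^{-1}\bigl(\rho\vee 2\ln(2\alpha)\bigr). \] More precisely, $\frac1e N^{-1}(\rho)\le\|X\|_\rho\le 2(4\ln(2\alpha))^{\log_2\alpha}N^{-1}(\rho)$ for all $\rho\ge 2\ln(2\alpha)$.
   Context: $\|X\|_\rho=(\mathbb{E}|X|^\rho)^{1/\rho}$; $a\vee b=\max\{a,b\}$. $\sim_\alpha$ means two-sided comparability with constants depending only on $\alpha$. *)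

theory Defs
  imports "HOL-Probability.Probability"
begin

text \<open>The L^rho norm  ||X||_rho = (E |X|^rho)^(1/rho)  of a real random variable
  (used only under the hypothesis that all moments of order >= 1 are finite).\<close>
definition lpnorm :: "'a measure \<Rightarrow> ('a \<Rightarrow> real) \<Rightarrow> real \<Rightarrow> real" where
  "lpnorm M X \<rho> = (\<integral>x. \<bar>X x\<bar> powr \<rho> \<partial>M) powr (1 / \<rho>)"

definition tailN :: "'a measure \<Rightarrow> ('a \<Rightarrow> real) \<Rightarrow> real \<Rightarrow> ereal" where
  "tailN M X t =
     (let p = measure M {x \<in> space M. \<bar>X x\<bar> \<ge> t}
      in if p = 0 then \<infinity> else ereal (- ln p))"

definition Ninv :: "'a measure \<Rightarrow> ('a \<Rightarrow> real) \<Rightarrow> real \<Rightarrow> real" where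
  "Ninv M X s = Sup {t. 0 \<le> t \<and> tailN M X t \<le> ereal s}"

definition moment_hyp :: "'a measure \<Rightarrow> ('a \<Rightarrow> real) \<Rightarrow> real \<Rightarrow> bool" where
  "moment_hyp M X \<alpha> \<longleftrightarrow> prob_space M \<and> X \<in> borel_measurable M \<and>
     (\<forall>\<rho>\<ge>1. integrable M (\<lambda>x. \<bar>X x\<bar> powr \<rho>)) \<and>
     (\<forall>\<rho>\<ge>1. lpnorm M X (2 * \<rho>) \<le> \<alpha> * lpnorm M X \<rho>)"

end

theory Submission
  imports Defs
begin

text \<open>The lower bound is Markov's inequality: if N(t) <= rho then
  t^rho e^(-rho) <= t^rho P(|X| >= t) <= E|X|^rho, so t <= e ||X||_rho.
  For the upper bound, a Paley-Zygmund argument (truncate |X|^r at level ||X||_r / 2, then apply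
  Cauchy-Schwarz) together with ||X||_(2r) <= alpha ||X||_r gives
  P(|X| >= ||X||_r / 2) >= (2 alpha)^(-2r), i.e. ||X||_r / 2 <= N^(-1)(2 r ln(2 alpha)).
  For rho = 2 r ln(2 alpha) and k with 2 ln(2 alpha) <= 2^k <= 4 ln(2 alpha), doubling the exponent
  k times gives ||X||_rho <= alpha^k ||X||_r <= 2 alpha^k N^(-1)(rho), and
  alpha^k <= (4 ln(2 alpha))^(log_2 alpha). Below the threshold 2 ln(2 alpha), the same doubling
  bound and the monotonicity of rho |-> ||X||_rho reduce everything to the threshold itself.\<close>

lemma powr_le_affine:
  fixes y s :: real
  assumes "0 \<le> y" "0 < s" "s \<le> 1"
  shows "y powr s \<le> s * y + (1 - s)"
proof (cases "y = 0")
  case True then show ?thesis using assms by simp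
next
  case False
  then have "y powr s * 1 powr (1 - s) \<le> s * y + (1 - s) * 1"
    using assms by (intro Youngs_inequality_0) auto
  then show ?thesis by simp
qed

lemma lpnorm_nonneg [simp]: "0 \<le> lpnorm M X \<rho>"
  by (simp add: lpnorm_def)

lemma tailN_le_ereal_iff:
  "tailN M X t \<le> ereal s \<longleftrightarrow> exp (- s) \<le> measure M {x \<in> space M. t \<le> \<bar>X x\<bar>}"
proof (cases "measure M {x \<in> space M. t \<le> \<bar>X x\<bar>} = 0")
  case True
  then show ?thesis by (simp add: tailN_def not_le)
next
  case False
  then have "0 < measure M {x \<in> space M. t \<le> \<bar>X x\<bar>}"
    by (simp add: zero_less_measure_iff)
  with False show ?thesis
    by (simp add: tailN_def ln_ge_iff minus_le_iff)
qed

context prob_space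
begin

lemma lpnorm_mono:
  assumes [measurable]: "X \<in> borel_measurable M"
    and iq: "integrable M (\<lambda>x. \<bar>X x\<bar> powr q)" and ip: "integrable M (\<lambda>x. \<bar>X x\<bar> powr p)"
    and "0 < p" "p \<le> q"
  shows "lpnorm M X p \<le> lpnorm M X q"
proof -
  define K where "K = (\<integral>x. \<bar>X x\<bar> powr q \<partial>M)"
  have "K \<ge> 0" unfolding K_def by (intro integral_nonneg_AE) auto
  have Lyapunov: "(\<integral>x. \<bar>X x\<bar> powr p \<partial>M) \<le> K powr (p/q)"
  proof (cases "K = 0")
    case True
    then have "AE x in M. \<bar>X x\<bar> powr q = 0"
      using integral_nonneg_eq_0_iff_AE[OF iq] unfolding K_def by auto
    then have "AE x in M. \<bar>X x\<bar> powr p = 0" by (auto elim!: AE_mp)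
    then have "(\<integral>x. \<bar>X x\<bar> powr p \<partial>M) = 0" by (simp add: integral_eq_zero_AE)
    then show ?thesis using True by simp
  next
    case False
    with \<open>K \<ge> 0\<close> have "K > 0" by simp
    define s where "s = p / q"
    have "0 < s" "s \<le> 1" using assms by (auto simp: s_def)
    have pointwise: "\<bar>X x\<bar> powr p \<le> K powr s * (s * (\<bar>X x\<bar> powr q / K) + (1 - s))" for x
    proof -
      have "\<bar>X x\<bar> powr p = K powr s * (\<bar>X x\<bar> powr q / K) powr s"
        using \<open>K > 0\<close> assms by (simp add: powr_divide powr_powr s_def)
      also have "\<dots> \<le> K powr s * (s * (\<bar>X x\<bar> powr q / K) + (1 - s))"
        using \<open>K > 0\<close> \<open>0 < s\<close> \<open>s \<le> 1\<close> by (intro mult_left_mono powr_le_affine) auto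
      finally show ?thesis .
    qed
    have "(\<integral>x. \<bar>X x\<bar> powr p \<partial>M) \<le> (\<integral>x. K powr s * (s * (\<bar>X x\<bar> powr q / K) + (1 - s)) \<partial>M)"
      using pointwise iq ip by (intro integral_mono) auto
    also have "\<dots> = K powr s"
      using iq \<open>K > 0\<close> by (simp add: K_def prob_space)
    finally show ?thesis by (simp add: s_def)
  qed
  have "lpnorm M X p \<le> (K powr (p/q)) powr (1/p)"
    unfolding lpnorm_def using Lyapunov assms by (intro powr_mono2) (auto intro: integral_nonneg_AE)
  also have "\<dots> = lpnorm M X q" using assms by (simp add: lpnorm_def K_def powr_powr)
  finally show ?thesis .
qed

lemma le_exp_lpnorm_of_tail:
  assumes [measurable]: "X \<in> borel_measurable M"
    and int: "integrable M (\<lambda>x. \<bar>X x\<bar> powr \<rho>)" and "0 < \<rho>" "0 \<le> t"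
    and tail: "exp (- \<rho>) \<le> prob {x \<in> space M. t \<le> \<bar>X x\<bar>}"
  shows "t \<le> exp 1 * lpnorm M X \<rho>"
proof (cases "t = 0")
  case False
  with \<open>0 \<le> t\<close> have "0 < t" by simp
  have "{x \<in> space M. t \<le> \<bar>X x\<bar>} = {x \<in> space M. t powr \<rho> \<le> \<bar>X x\<bar> powr \<rho>}"
    using \<open>0 < t\<close> \<open>0 < \<rho>\<close> by (auto intro: powr_mono2) (meson abs_ge_zero not_le powr_less_mono2)
  also have "prob \<dots> \<le> (\<integral>x. \<bar>X x\<bar> powr \<rho> \<partial>M) / t powr \<rho>"
    using \<open>0 < t\<close> by (intro integral_Markov_inequality_measure[OF int, of "space M"]) auto
  finally have "prob {x \<in> space M. t \<le> \<bar>X x\<bar>} * t powr \<rho> \<le> (\<integral>x. \<bar>X x\<bar> powr \<rho> \<partial>M)"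
    using \<open>0 < t\<close> by (simp add: field_simps)
  moreover have "exp (- \<rho>) * t powr \<rho> \<le> prob {x \<in> space M. t \<le> \<bar>X x\<bar>} * t powr \<rho>"
    by (rule mult_right_mono[OF tail]) simp
  ultimately have "exp (- \<rho>) * t powr \<rho> \<le> (\<integral>x. \<bar>X x\<bar> powr \<rho> \<partial>M)"
    by linarith
  then have "(exp (- \<rho>) * t powr \<rho>) powr (1 / \<rho>) \<le> lpnorm M X \<rho>"
    unfolding lpnorm_def using \<open>0 < \<rho>\<close> by (intro powr_mono2) auto
  moreover have "(exp (- \<rho>) * t powr \<rho>) powr (1 / \<rho>) = t / exp 1"
  proof -
    have "(exp (- \<rho>) * t powr \<rho>) powr (1 / \<rho>) = exp (- \<rho> * (1 / \<rho>)) * t"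
      using \<open>0 < t\<close> \<open>0 < \<rho>\<close> by (simp add: powr_mult powr_powr exp_powr_real)
    then show ?thesis using \<open>0 < \<rho>\<close> by (simp add: exp_minus field_simps)
  qed
  ultimately show ?thesis by (simp add: field_simps)
qed simp

lemma
  assumes [measurable]: "X \<in> borel_measurable M"
    and int: "integrable M (\<lambda>x. \<bar>X x\<bar> powr s)" and "0 < s"
  shows Ninv_nonneg: "0 \<le> Ninv M X s"
    and le_Ninv: "0 \<le> t \<Longrightarrow> tailN M X t \<le> ereal s \<Longrightarrow> t \<le> Ninv M X s"
    and Ninv_le_exp_lpnorm: "Ninv M X s \<le> exp 1 * lpnorm M X s"
proof -
  define T where "T = {t. 0 \<le> t \<and> tailN M X t \<le> ereal s}"
  have bound: "t \<le> exp 1 * lpnorm M X s" if "t \<in> T" for t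
    using that le_exp_lpnorm_of_tail[OF _ int \<open>0 < s\<close>]
    by (auto simp: T_def tailN_le_ereal_iff)
  have "{x \<in> space M. 0 \<le> \<bar>X x\<bar>} = space M" by auto
  then have "0 \<in> T"
    using \<open>0 < s\<close> by (simp add: T_def tailN_le_ereal_iff prob_space)
  have "bdd_above T" using bound by (auto simp: bdd_above_def)
  have Ninv_eq: "Ninv M X s = Sup T" by (simp add: Ninv_def T_def)
  show "0 \<le> Ninv M X s" unfolding Ninv_eq using \<open>0 \<in> T\<close> \<open>bdd_above T\<close> by (rule cSup_upper)
  show "0 \<le> t \<Longrightarrow> tailN M X t \<le> ereal s \<Longrightarrow> t \<le> Ninv M X s"
    unfolding Ninv_eq using \<open>bdd_above T\<close> by (intro cSup_upper) (auto simp: T_def)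
  show "Ninv M X s \<le> exp 1 * lpnorm M X s"
    unfolding Ninv_eq using \<open>0 \<in> T\<close> bound by (intro cSup_least) auto
qed

lemma integral_mult_indicator_square_le:
  fixes f :: "'a \<Rightarrow> real"
  assumes f: "integrable M f" and f2: "integrable M (\<lambda>x. f x ^ 2)" and [measurable]: "A \<in> events"
  shows "(\<integral>x. f x * indicator A x \<partial>M)\<^sup>2 \<le> (\<integral>x. f x ^ 2 \<partial>M) * prob A"
proof -
  define J where "J = (\<integral>x. f x * indicator A x \<partial>M)"
  define F where "F = (\<integral>x. f x ^ 2 \<partial>M)"
  have intJ: "integrable M (\<lambda>x. f x * indicator A x)"
    using integrable_mult_indicator[OF _ f] by (simp add: mult.commute)
  have intA: "integrable M (indicator A :: 'a \<Rightarrow> real)"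
    by (intro integrable_real_indicator) (auto simp: emeasure_eq_measure)
  have "F \<ge> 0" unfolding F_def by (intro integral_nonneg_AE) auto
  have quadratic: "2 * l * J \<le> l\<^sup>2 * F + prob A" for l
  proof -
    have "2 * l * (f x * indicator A x) \<le> l\<^sup>2 * f x ^ 2 + indicator A x" for x
      using zero_le_power2[of "l * f x - 1"] zero_le_power2[of "l * f x"]
      by (cases "x \<in> A") (auto simp: power2_eq_square algebra_simps)
    then have "(\<integral>x. 2 * l * (f x * indicator A x) \<partial>M) \<le> (\<integral>x. l\<^sup>2 * f x ^ 2 + indicator A x \<partial>M)"
      using intJ intA f2 by (intro integral_mono) auto
    then show ?thesis using intA f2 by (simp add: J_def F_def)
  qed
  show ?thesis
  proof (cases "F = 0")
    case True
    then have "AE x in M. f x ^ 2 = 0"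
      using integral_nonneg_eq_0_iff_AE[OF f2] by (simp add: F_def)
    then have "J = 0" unfolding J_def by (intro integral_eq_zero_AE) auto
    then show ?thesis using \<open>F \<ge> 0\<close> by (simp add: J_def[symmetric] F_def[symmetric])
  next
    case False
    with \<open>F \<ge> 0\<close> have "F > 0" by simp
    from quadratic[of "J / F"] \<open>F > 0\<close> have "J\<^sup>2 \<le> F * prob A"
      by (simp add: field_simps power2_eq_square)
    then show ?thesis by (simp add: J_def F_def)
  qed
qed

lemma paley_zygmund_lpnorm:
  assumes [measurable]: "X \<in> borel_measurable M"
    and int1: "integrable M (\<lambda>x. \<bar>X x\<bar> powr r)"
    and int2: "integrable M (\<lambda>x. \<bar>X x\<bar> powr (2 * r))"
    and "1 \<le> r" "1 \<le> \<alpha>" and hyp: "lpnorm M X (2 * r) \<le> \<alpha> * lpnorm M X r"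
  shows "exp (- (2 * r * ln (2 * \<alpha>))) \<le> prob {x \<in> space M. lpnorm M X r / 2 \<le> \<bar>X x\<bar>}"
proof -
  define E where "E = (\<integral>x. \<bar>X x\<bar> powr r \<partial>M)"
  define L where "L = lpnorm M X r"
  define S where "S = {x \<in> space M. L / 2 \<le> \<bar>X x\<bar>}"
  have [measurable]: "S \<in> events" unfolding S_def by measurable
  have "E \<ge> 0" unfolding E_def by (intro integral_nonneg_AE) auto
  have L_eq: "L = E powr (1 / r)" by (simp add: L_def lpnorm_def E_def)
  show ?thesis
  proof (cases "E = 0")
    case True
    then have "S = space M" by (auto simp: S_def L_eq)
    then show ?thesis using \<open>1 \<le> r\<close> \<open>1 \<le> \<alpha>\<close> by (simp add: L_def S_def prob_space)
  next
    case False
    with \<open>E \<ge> 0\<close> have "E > 0" by simp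
    then have "L > 0" by (simp add: L_eq)
    have E_eq: "E = L powr r" using \<open>E \<ge> 0\<close> \<open>1 \<le> r\<close> by (simp add: L_eq powr_powr)
    define \<theta> where "\<theta> = 2 powr (- r)"
    have "0 < \<theta>" by (simp add: \<theta>_def)
    have "\<theta> \<le> 2 powr (-1)" unfolding \<theta>_def using \<open>1 \<le> r\<close> by (intro powr_mono) auto
    then have "\<theta> \<le> 1 / 2" by (simp add: powr_minus)
    define J where "J = (\<integral>x. \<bar>X x\<bar> powr r * indicator S x \<partial>M)"
    have intJ: "integrable M (\<lambda>x. \<bar>X x\<bar> powr r * indicator S x)"
      using integrable_mult_indicator[OF _ int1] by (simp add: mult.commute)
    have truncation: "(1 - \<theta>) * E \<le> J"
    proof -
      have "\<bar>X x\<bar> powr r \<le> \<theta> * E + \<bar>X x\<bar> powr r * indicator S x" if "x \<in> space M" for x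
      proof (cases "x \<in> S")
        case False
        then have "\<bar>X x\<bar> powr r \<le> (L / 2) powr r"
          using that \<open>1 \<le> r\<close> by (intro powr_mono2) (auto simp: S_def)
        also have "\<dots> = \<theta> * E" using \<open>L > 0\<close> by (simp add: E_eq \<theta>_def powr_divide powr_minus_divide)
        finally show ?thesis using False by simp
      qed (use \<open>0 < \<theta>\<close> \<open>E \<ge> 0\<close> in simp)
      then have "E \<le> (\<integral>x. \<theta> * E + \<bar>X x\<bar> powr r * indicator S x \<partial>M)"
        unfolding E_def using int1 intJ by (intro integral_mono) auto
      then show ?thesis using intJ by (simp add: J_def prob_space algebra_simps)
    qed
    have sq: "(y powr r)\<^sup>2 = y powr (2 * r)" for y :: real
      by (metis mult_2 powr_add power2_eq_square)
    have moment_2r: "(\<integral>x. \<bar>X x\<bar> powr (2 * r) \<partial>M) \<le> \<alpha> powr (2 * r) * E\<^sup>2"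
    proof -
      have "(\<integral>x. \<bar>X x\<bar> powr (2 * r) \<partial>M) = lpnorm M X (2 * r) powr (2 * r)"
        using \<open>1 \<le> r\<close> by (simp add: lpnorm_def powr_powr integral_nonneg_AE)
      also have "\<dots> \<le> (\<alpha> * L) powr (2 * r)"
        using hyp \<open>1 \<le> r\<close> by (intro powr_mono2) (auto simp: L_def)
      also have "\<dots> = \<alpha> powr (2 * r) * E\<^sup>2"
        using \<open>1 \<le> \<alpha>\<close> \<open>L > 0\<close> by (simp add: E_eq powr_mult sq)
      finally show ?thesis .
    qed
    have "((1 - \<theta>) * E)\<^sup>2 \<le> J\<^sup>2"
      using \<open>\<theta> \<le> 1 / 2\<close> \<open>E \<ge> 0\<close> by (intro power_mono truncation) auto
    then have "(1 - \<theta>)\<^sup>2 * E\<^sup>2 \<le> J\<^sup>2" by (simp add: power_mult_distrib)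
    also have "\<dots> \<le> (\<integral>x. \<bar>X x\<bar> powr (2 * r) \<partial>M) * prob S"
      using integral_mult_indicator_square_le[of "\<lambda>x. \<bar>X x\<bar> powr r" S] int1 int2
      by (simp add: J_def sq)
    also have "\<dots> \<le> \<alpha> powr (2 * r) * prob S * E\<^sup>2"
      using mult_right_mono[OF moment_2r, of "prob S"] by (simp add: algebra_simps)
    finally have "(1 - \<theta>)\<^sup>2 \<le> \<alpha> powr (2 * r) * prob S"
      using \<open>E > 0\<close> by (simp add: mult_le_cancel_right_pos)
    moreover have "\<theta>\<^sup>2 \<le> (1 - \<theta>)\<^sup>2"
      using \<open>0 < \<theta>\<close> \<open>\<theta> \<le> 1 / 2\<close> by (intro power_mono) auto
    moreover have "\<theta>\<^sup>2 = exp (- (2 * r * ln (2 * \<alpha>))) * \<alpha> powr (2 * r)"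
    proof -
      have "\<theta>\<^sup>2 = exp (- (2 * r * ln 2))"
        by (simp add: \<theta>_def powr_def power2_eq_square flip: exp_add)
      also have "\<dots> = exp (- (2 * r * ln (2 * \<alpha>)) + 2 * r * ln \<alpha>)"
        using \<open>1 \<le> \<alpha>\<close> by (simp add: ln_mult algebra_simps)
      also have "\<dots> = exp (- (2 * r * ln (2 * \<alpha>))) * \<alpha> powr (2 * r)"
        using \<open>1 \<le> \<alpha>\<close> by (simp add: powr_def mult_exp_exp algebra_simps)
      finally show ?thesis .
    qed
    ultimately have "exp (- (2 * r * ln (2 * \<alpha>))) * \<alpha> powr (2 * r) \<le> prob S * \<alpha> powr (2 * r)"
      by (simp add: mult.commute)
    then show ?thesis
      using \<open>1 \<le> \<alpha>\<close> by (simp add: S_def L_def mult_le_cancel_right_pos)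
  qed
qed

end

lemma moment_hypD:
  assumes "moment_hyp M X \<alpha>"
  shows "prob_space M" "X \<in> borel_measurable M"
    and "1 \<le> \<rho> \<Longrightarrow> integrable M (\<lambda>x. \<bar>X x\<bar> powr \<rho>)"
    and "1 \<le> \<rho> \<Longrightarrow> lpnorm M X (2 * \<rho>) \<le> \<alpha> * lpnorm M X \<rho>"
  using assms by (auto simp: moment_hyp_def)

lemma lpnorm_pow2_mult_le:
  assumes H: "moment_hyp M X \<alpha>" and "0 \<le> \<alpha>" "1 \<le> r"
  shows "lpnorm M X (2 ^ k * r) \<le> \<alpha> ^ k * lpnorm M X r"
proof (induction k)
  case (Suc k)
  have "1 \<le> 2 ^ k * r" using mult_mono[of 1 "2 ^ k" 1 r] \<open>1 \<le> r\<close> by simp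
  then have "lpnorm M X (2 * (2 ^ k * r)) \<le> \<alpha> * lpnorm M X (2 ^ k * r)"
    by (rule moment_hypD(4)[OF H])
  also have "\<dots> \<le> \<alpha> * (\<alpha> ^ k * lpnorm M X r)" using Suc \<open>0 \<le> \<alpha>\<close> by (intro mult_left_mono)
  finally show ?case by (simp add: mult.assoc)
qed simp

lemma lpnorm_le_pow_mult:
  assumes H: "moment_hyp M X \<alpha>" and "0 \<le> \<alpha>" "1 \<le> r" "1 \<le> s" "s \<le> 2 ^ k * r"
  shows "lpnorm M X s \<le> \<alpha> ^ k * lpnorm M X r"
proof -
  interpret prob_space M by (rule moment_hypD(1)[OF H])
  have "lpnorm M X s \<le> lpnorm M X (2 ^ k * r)"
    using assms by (intro lpnorm_mono moment_hypD[OF H]) auto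
  also have "\<dots> \<le> \<alpha> ^ k * lpnorm M X r" using lpnorm_pow2_mult_le assms by blast
  finally show ?thesis .
qed

lemma one_less_two_ln_two_mult:
  assumes "1 \<le> (\<alpha>::real)"
  shows "1 < 2 * ln (2 * \<alpha>)"
proof -
  have "1 / 2 < ln (2::real)" using ln_add1_gt[of 1] by (simp add: one_add_one)
  moreover have "ln 2 \<le> ln (2 * \<alpha>)" using assms by simp
  ultimately show ?thesis by linarith
qed

lemma lpnorm_le_Ninv:
  assumes H: "moment_hyp M X \<alpha>" and "1 \<le> \<alpha>" "2 * ln (2 * \<alpha>) \<le> 2 ^ k" "\<alpha> ^ k \<le> B"
    and \<rho>: "2 * ln (2 * \<alpha>) \<le> \<rho>"
  shows "lpnorm M X \<rho> \<le> 2 * B * Ninv M X \<rho>"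
proof -
  interpret prob_space M by (rule moment_hypD(1)[OF H])
  define r where "r = \<rho> / (2 * ln (2 * \<alpha>))"
  have "1 < 2 * ln (2 * \<alpha>)" using \<open>1 \<le> \<alpha>\<close> by (rule one_less_two_ln_two_mult)
  then have "1 \<le> r" "1 \<le> \<rho>" and \<rho>_eq: "\<rho> = 2 * r * ln (2 * \<alpha>)"
    using \<rho> by (auto simp: r_def)
  have "\<rho> \<le> 2 ^ k * r"
    using \<rho>_eq \<open>1 \<le> r\<close> mult_right_mono[OF assms(3), of r] by (simp add: mult.commute)
  then have "lpnorm M X \<rho> \<le> \<alpha> ^ k * lpnorm M X r"
    using lpnorm_le_pow_mult[OF H _ \<open>1 \<le> r\<close> \<open>1 \<le> \<rho>\<close>] \<open>1 \<le> \<alpha>\<close> by simp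
  also have "\<dots> \<le> B * lpnorm M X r"
    using \<open>\<alpha> ^ k \<le> B\<close> by (intro mult_right_mono) auto
  also have "\<dots> \<le> B * (2 * Ninv M X \<rho>)"
  proof (intro mult_left_mono)
    have "tailN M X (lpnorm M X r / 2) \<le> ereal \<rho>"
      unfolding tailN_le_ereal_iff \<rho>_eq using \<open>1 \<le> r\<close> \<open>1 \<le> \<alpha>\<close>
      by (intro paley_zygmund_lpnorm moment_hypD[OF H]) auto
    then have "lpnorm M X r / 2 \<le> Ninv M X \<rho>"
      using \<open>1 \<le> \<rho>\<close> by (intro le_Ninv moment_hypD[OF H]) auto
    then show "lpnorm M X r \<le> 2 * Ninv M X \<rho>" by simp
  qed (use \<open>1 \<le> \<alpha>\<close> \<open>\<alpha> ^ k \<le> B\<close> one_le_power[of \<alpha> k] in linarith)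
  finally show ?thesis by (simp add: mult.assoc mult.left_commute)
qed

lemma exists_pow2_between:
  fixes x :: real
  assumes "1 \<le> x"
  obtains k :: nat where "x \<le> 2 ^ k" "2 ^ k \<le> 2 * x"
proof
  define k where "k = nat \<lceil>log 2 x\<rceil>"
  have "real k = \<lceil>log 2 x\<rceil>" using assms by (simp add: k_def)
  then have "log 2 x \<le> real k" "real k \<le> log 2 x + 1" by linarith+
  have pow_eq: "(2::real) ^ k = 2 powr real k" by (simp add: powr_realpow)
  have "x = 2 powr log 2 x" using assms by simp
  also have "\<dots> \<le> 2 ^ k" unfolding pow_eq using \<open>log 2 x \<le> real k\<close> by (intro powr_mono) auto
  finally show "x \<le> 2 ^ k" .
  have "(2::real) ^ k \<le> 2 powr (log 2 x + 1)"
    unfolding pow_eq using \<open>real k \<le> log 2 x + 1\<close> by (intro powr_mono) auto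
  also have "\<dots> = 2 * x" using assms by (simp add: powr_add)
  finally show "2 ^ k \<le> 2 * x" .
qed

lemma power_le_powr_log2:
  fixes \<alpha> y :: real
  assumes "1 \<le> \<alpha>" "2 ^ k \<le> y"
  shows "\<alpha> ^ k \<le> y powr log 2 \<alpha>"
proof -
  have "\<alpha> ^ k = (2 powr log 2 \<alpha>) powr real k" using assms by (simp add: powr_realpow)
  also have "\<dots> = (2 ^ k) powr log 2 \<alpha>" by (simp add: powr_powr powr_realpow[symmetric] mult.commute)
  also have "\<dots> \<le> y powr log 2 \<alpha>" using assms by (intro powr_mono2) auto
  finally show ?thesis .
qed

lemma lpnorm_Ninv_max_bounds:
  assumes H: "moment_hyp M X \<alpha>" and "1 \<le> \<alpha>" "2 * ln (2 * \<alpha>) \<le> 2 ^ k" "\<alpha> ^ k \<le> B"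
    and "1 \<le> \<rho>"
  shows "1 / (exp 1 * B) * Ninv M X (max \<rho> (2 * ln (2 * \<alpha>))) \<le> lpnorm M X \<rho>"
    and "lpnorm M X \<rho> \<le> 2 * B * Ninv M X (max \<rho> (2 * ln (2 * \<alpha>)))"
proof -
  interpret prob_space M by (rule moment_hypD(1)[OF H])
  let ?\<rho>\<^sub>0 = "2 * ln (2 * \<alpha>)"
  have "1 < ?\<rho>\<^sub>0" using \<open>1 \<le> \<alpha>\<close> by (rule one_less_two_ln_two_mult)
  have "1 \<le> B" using \<open>1 \<le> \<alpha>\<close> \<open>\<alpha> ^ k \<le> B\<close> one_le_power[of \<alpha> k] by linarith
  have "Ninv M X (max \<rho> ?\<rho>\<^sub>0) \<le> exp 1 * (B * lpnorm M X \<rho>) \<and>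
        lpnorm M X \<rho> \<le> 2 * B * Ninv M X (max \<rho> ?\<rho>\<^sub>0)"
  proof (cases "?\<rho>\<^sub>0 \<le> \<rho>")
    case True
    have "Ninv M X \<rho> \<le> exp 1 * lpnorm M X \<rho>"
      using \<open>1 \<le> \<rho>\<close> by (intro Ninv_le_exp_lpnorm moment_hypD[OF H]) auto
    also have "\<dots> \<le> exp 1 * (B * lpnorm M X \<rho>)"
      using mult_right_mono[OF \<open>1 \<le> B\<close>, of "lpnorm M X \<rho>"] by simp
    finally show ?thesis
      using True lpnorm_le_Ninv[OF H \<open>1 \<le> \<alpha>\<close> assms(3,4)] by simp
  next
    case False
    have "Ninv M X ?\<rho>\<^sub>0 \<le> exp 1 * lpnorm M X ?\<rho>\<^sub>0"
      using \<open>1 < ?\<rho>\<^sub>0\<close> by (intro Ninv_le_exp_lpnorm moment_hypD[OF H]) auto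
    also have "\<dots> \<le> exp 1 * (\<alpha> ^ k * lpnorm M X \<rho>)"
      using \<open>1 \<le> \<alpha>\<close> \<open>1 \<le> \<rho>\<close> \<open>1 < ?\<rho>\<^sub>0\<close> assms(3) mult_mono[of "?\<rho>\<^sub>0" "2 ^ k" 1 \<rho>]
      by (intro mult_left_mono lpnorm_le_pow_mult[OF H]) auto
    also have "\<dots> \<le> exp 1 * (B * lpnorm M X \<rho>)"
      using \<open>\<alpha> ^ k \<le> B\<close> by (intro mult_left_mono mult_right_mono) auto
    finally have "Ninv M X ?\<rho>\<^sub>0 \<le> exp 1 * (B * lpnorm M X \<rho>)" .
    moreover have "lpnorm M X \<rho> \<le> lpnorm M X ?\<rho>\<^sub>0"
      using False \<open>1 \<le> \<rho>\<close> by (intro lpnorm_mono moment_hypD[OF H]) auto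
    ultimately show ?thesis
      using False lpnorm_le_Ninv[OF H \<open>1 \<le> \<alpha>\<close> assms(3,4) order_refl] by simp
  qed
  then show "1 / (exp 1 * B) * Ninv M X (max \<rho> ?\<rho>\<^sub>0) \<le> lpnorm M X \<rho>"
    and "lpnorm M X \<rho> \<le> 2 * B * Ninv M X (max \<rho> ?\<rho>\<^sub>0)"
    using \<open>1 \<le> B\<close> by (auto simp: divide_le_eq mult.commute mult.left_commute)
qed

theorem mainTheorem5:
  fixes \<alpha> :: real
  assumes "\<alpha> \<ge> 1"
  shows "(\<exists>c>0. \<exists>C>0. \<forall>(M::'a measure) X. moment_hyp M X \<alpha> \<longrightarrow>
            (\<forall>\<rho>\<ge>1. c * Ninv M X (max \<rho> (2 * ln (2 * \<alpha>))) \<le> lpnorm M X \<rho> \<and>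
                     lpnorm M X \<rho> \<le> C * Ninv M X (max \<rho> (2 * ln (2 * \<alpha>)))))
       \<and> (\<forall>(M::'a measure) X. moment_hyp M X \<alpha> \<longrightarrow>
            (\<forall>\<rho>\<ge>2 * ln (2 * \<alpha>).
               (1 / exp 1) * Ninv M X \<rho> \<le> lpnorm M X \<rho> \<and>
               lpnorm M X \<rho> \<le> 2 * (4 * ln (2 * \<alpha>)) powr (log 2 \<alpha>) * Ninv M X \<rho>))"
proof -
  let ?B = "(4 * ln (2 * \<alpha>)) powr (log 2 \<alpha>)"
  have "1 < 2 * ln (2 * \<alpha>)" using assms by (rule one_less_two_ln_two_mult)
  then obtain k :: nat where k: "2 * ln (2 * \<alpha>) \<le> 2 ^ k" "2 ^ k \<le> 2 * (2 * ln (2 * \<alpha>))"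
    using exists_pow2_between by (metis less_imp_le)
  have "\<alpha> ^ k \<le> ?B" using power_le_powr_log2[OF assms k(2)] by simp
  moreover have "1 \<le> \<alpha> ^ k" using assms by simp
  ultimately have "0 < ?B" by linarith
  have lower: "1 / exp 1 * Ninv M X \<rho> \<le> lpnorm M X \<rho>"
    if H: "moment_hyp M X \<alpha>" and "1 \<le> \<rho>" for M :: "'a measure" and X \<rho>
  proof -
    interpret prob_space M by (rule moment_hypD(1)[OF H])
    have "Ninv M X \<rho> \<le> exp 1 * lpnorm M X \<rho>"
      using \<open>1 \<le> \<rho>\<close> by (intro Ninv_le_exp_lpnorm moment_hypD[OF H]) auto
    then show ?thesis by (simp add: divide_le_eq mult.commute)
  qed
  show ?thesis
  proof (intro conjI, rule exI[of _ "1 / (exp 1 * ?B)"], intro conjI exI[of _ "2 * ?B"] allI impI)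
    show "0 < 1 / (exp 1 * ?B)" "0 < 2 * ?B" using \<open>0 < ?B\<close> by simp_all
  qed (use lpnorm_Ninv_max_bounds[OF _ assms k(1) \<open>\<alpha> ^ k \<le> ?B\<close>]
         lpnorm_le_Ninv[OF _ assms k(1) \<open>\<alpha> ^ k \<le> ?B\<close>] lower \<open>1 < 2 * ln (2 * \<alpha>)\<close>
       in \<open>auto\<close>)
qed

end
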